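(* Let $n<\omega$ and let $\mathfrak D\in\mathsf{QEA}_\omega$ be atomic and such that for all $x\in\mathfrak D$ and all $k<\omega$, $\mathsf c_kx=\sum_{l\in\omega}\mathsf s^k_lx$. If $\mathfrak A\subseteq\mathfrak{Nr}_n\mathfrak D$ and $\mathfrak A\subseteq_c\mathfrak D$, then $\mathfrak A$ is completely representable.
   Context: $\mathsf{QEA}_\omega$ is the class of $\omega$-dimensional quasi-polyadic equality algebras: the signature of polyadic equality algebras restricted to cylindrifications on finitely many indices and substitutions $\mathsf s_\tau$ only for finite transformations $\tau:\omega\to\omega$ (moving finitely many points), with diagonals $\mathsf d_{ij}$, axiomatized by the corresponding restriction of the polyadic equality axioms. $\mathsf s^k_l$ is the substitution corresponding to the map sending $k$ to $l$ and fixing all other points. $\mathfrak{Nr}_n\mathfrak D$ has universe $\{x:\mathsf c_ix=x\ \forall i\in\omega\setminus n\}$ with operations indexed in $n$. $\mathfrak A\subseteq_c\mathfrak D$ means $\mathfrak A$ is a subalgebra and every $X\subseteq A$ with $\sum^{\mathfrak A}X=1$ has $\sum^{\mathfrak D}X=1$. Completely representable: there is an isomorphism $f$ from $\mathfrak A$ onto a set algebra (concrete operations) whose unit is a disjoint union of cartesian spaces ${}^nU_i$, with $f(\sum X)=\bigcup_{x\in X}f(x)$ whenever $\sum X$ exists. *)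

theory Defs
  imports "HOL-Library.FuncSet"
begin

text \<open>
  An omega-dimensional quasi-polyadic equality algebra is represented as a Boolean
  algebra on a whole type 'a (class boolean_algebra) together with
    cyl  :: nat set \<Rightarrow> 'a \<Rightarrow> 'a        (c_Gamma, meaningful for finite Gamma),
    sub  :: (nat \<Rightarrow> nat) \<Rightarrow> 'a \<Rightarrow> 'a  (s_tau, meaningful for finite transformations tau),
    diag :: nat \<Rightarrow> nat \<Rightarrow> 'a          (d_ij).
  The axioms are Halmos' polyadic equality axioms restricted to finite Gamma and
  finite transformations.
\<close>

definition finite_transf :: "(nat \<Rightarrow> nat) \<Rightarrow> bool" where
  "finite_transf \<tau> \<longleftrightarrow> finite {i. \<tau> i \<noteq> i}"

definition is_quantifier :: "('a::boolean_algebra \<Rightarrow> 'a) \<Rightarrow> bool" where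
  "is_quantifier c \<longleftrightarrow> c bot = bot \<and> (\<forall>x. x \<le> c x) \<and> (\<forall>x y. c (inf x (c y)) = inf (c x) (c y))"

definition bool_endo :: "('a::boolean_algebra \<Rightarrow> 'a) \<Rightarrow> bool" where
  "bool_endo h \<longleftrightarrow> h bot = bot \<and> h top = top \<and> (\<forall>x y. h (sup x y) = sup (h x) (h y))
     \<and> (\<forall>x y. h (inf x y) = inf (h x) (h y)) \<and> (\<forall>x. h (- x) = - h x)"

definition repl :: "nat \<Rightarrow> nat \<Rightarrow> nat \<Rightarrow> nat" where
  "repl k l = id(k := l)"

definition QEA_omega ::
  "(nat set \<Rightarrow> 'a::boolean_algebra \<Rightarrow> 'a) \<Rightarrow> ((nat \<Rightarrow> nat) \<Rightarrow> 'a \<Rightarrow> 'a) \<Rightarrow> (nat \<Rightarrow> nat \<Rightarrow> 'a) \<Rightarrow> bool" where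
  "QEA_omega cyl sub diag \<longleftrightarrow>
     (\<forall>x. cyl {} x = x)
   \<and> (\<forall>\<Gamma> \<Delta> x. finite \<Gamma> \<longrightarrow> finite \<Delta> \<longrightarrow> cyl (\<Gamma> \<union> \<Delta>) x = cyl \<Gamma> (cyl \<Delta> x))
   \<and> (\<forall>\<Gamma>. finite \<Gamma> \<longrightarrow> is_quantifier (cyl \<Gamma>))
   \<and> (\<forall>x. sub id x = x)
   \<and> (\<forall>\<sigma> \<tau> x. finite_transf \<sigma> \<longrightarrow> finite_transf \<tau> \<longrightarrow> sub (\<sigma> \<circ> \<tau>) x = sub \<sigma> (sub \<tau> x))
   \<and> (\<forall>\<tau>. finite_transf \<tau> \<longrightarrow> bool_endo (sub \<tau>))
   \<and> (\<forall>\<sigma> \<tau> \<Gamma> x. finite_transf \<sigma> \<longrightarrow> finite_transf \<tau> \<longrightarrow> finite \<Gamma> \<longrightarrow>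
        (\<forall>i. i \<notin> \<Gamma> \<longrightarrow> \<sigma> i = \<tau> i) \<longrightarrow> sub \<sigma> (cyl \<Gamma> x) = sub \<tau> (cyl \<Gamma> x))
   \<and> (\<forall>\<tau> \<Gamma> x. finite_transf \<tau> \<longrightarrow> finite \<Gamma> \<longrightarrow> inj_on \<tau> (\<tau> -` \<Gamma>) \<longrightarrow>
        cyl \<Gamma> (sub \<tau> x) = sub \<tau> (cyl (\<tau> -` \<Gamma>) x))
   \<and> (\<forall>\<tau> i j. finite_transf \<tau> \<longrightarrow> sub \<tau> (diag i j) = diag (\<tau> i) (\<tau> j))
   \<and> (\<forall>i. diag i i = top)
   \<and> (\<forall>i j x. inf x (diag i j) \<le> sub (repl i j) x)"

definition atom :: "'a::boolean_algebra \<Rightarrow> bool" where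
  "atom a \<longleftrightarrow> a \<noteq> bot \<and> (\<forall>y. y \<le> a \<longrightarrow> y = bot \<or> y = a)"

definition atomic :: "'a::boolean_algebra itself \<Rightarrow> bool" where
  "atomic _ \<longleftrightarrow> (\<forall>x::'a. x \<noteq> bot \<longrightarrow> (\<exists>a. atom a \<and> a \<le> x))"

definition is_sum_in :: "'a::order set \<Rightarrow> 'a set \<Rightarrow> 'a \<Rightarrow> bool" where
  "is_sum_in S X s \<longleftrightarrow> s \<in> S \<and> (\<forall>x\<in>X. x \<le> s) \<and> (\<forall>u\<in>S. (\<forall>x\<in>X. x \<le> u) \<longrightarrow> s \<le> u)"

definition ext_transf :: "nat \<Rightarrow> (nat \<Rightarrow> nat) \<Rightarrow> nat \<Rightarrow> nat" where
  "ext_transf n \<tau> = (\<lambda>j. if j < n then \<tau> j else j)"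

definition Nr :: "nat \<Rightarrow> (nat set \<Rightarrow> 'a \<Rightarrow> 'a) \<Rightarrow> 'a set" where
  "Nr n cyl = {x. \<forall>i. n \<le> i \<longrightarrow> cyl {i} x = x}"

definition subalg_Nr ::
  "nat \<Rightarrow> (nat set \<Rightarrow> 'a::boolean_algebra \<Rightarrow> 'a) \<Rightarrow> ((nat \<Rightarrow> nat) \<Rightarrow> 'a \<Rightarrow> 'a) \<Rightarrow> (nat \<Rightarrow> nat \<Rightarrow> 'a) \<Rightarrow> 'a set \<Rightarrow> bool" where
  "subalg_Nr n cyl sub diag A \<longleftrightarrow>
     A \<subseteq> Nr n cyl \<and> bot \<in> A \<and> top \<in> A
   \<and> (\<forall>x\<in>A. \<forall>y\<in>A. sup x y \<in> A \<and> inf x y \<in> A) \<and> (\<forall>x\<in>A. - x \<in> A)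
   \<and> (\<forall>\<Gamma> x. \<Gamma> \<subseteq> {..<n} \<longrightarrow> x \<in> A \<longrightarrow> cyl \<Gamma> x \<in> A)
   \<and> (\<forall>\<tau> x. (\<forall>j<n. \<tau> j < n) \<longrightarrow> x \<in> A \<longrightarrow> sub (ext_transf n \<tau>) x \<in> A)
   \<and> (\<forall>i j. i < n \<longrightarrow> j < n \<longrightarrow> diag i j \<in> A)"

definition complete_sub :: "'a::boolean_algebra set \<Rightarrow> bool" where
  "complete_sub A \<longleftrightarrow> (\<forall>X. X \<subseteq> A \<longrightarrow> is_sum_in A X top \<longrightarrow> is_sum_in UNIV X top)"

text \<open>Complete representation of the n-dimensional algebra A: an injective map into
  the powerset of the unit V = disjoint union (tagged by I) of the cartesian spaces
  ^n(U i), with concrete operations, carrying existing suprema in A to unions.\<close>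
definition complete_representation ::
  "nat \<Rightarrow> (nat set \<Rightarrow> 'a::boolean_algebra \<Rightarrow> 'a) \<Rightarrow> ((nat \<Rightarrow> nat) \<Rightarrow> 'a \<Rightarrow> 'a) \<Rightarrow> (nat \<Rightarrow> nat \<Rightarrow> 'a)
   \<Rightarrow> 'a set \<Rightarrow> 'i set \<Rightarrow> ('i \<Rightarrow> 'u set) \<Rightarrow> ('a \<Rightarrow> ('i \<times> (nat \<Rightarrow> 'u)) set) \<Rightarrow> bool" where
  "complete_representation n cyl sub diag A I U f \<longleftrightarrow>
     (let V = Sigma I (\<lambda>i. PiE {..<n} (\<lambda>_. U i)) in
        inj_on f A
      \<and> (\<forall>x\<in>A. f x \<subseteq> V)
      \<and> f bot = {} \<and> f top = V
      \<and> (\<forall>x\<in>A. \<forall>y\<in>A. f (sup x y) = f x \<union> f y \<and> f (inf x y) = f x \<inter> f y)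
      \<and> (\<forall>x\<in>A. f (- x) = V - f x)
      \<and> (\<forall>\<Gamma> x. \<Gamma> \<subseteq> {..<n} \<longrightarrow> x \<in> A \<longrightarrow>
           f (cyl \<Gamma> x) = {(i, s) \<in> V. \<exists>t. (i, t) \<in> f x \<and> (\<forall>j<n. j \<notin> \<Gamma> \<longrightarrow> t j = s j)})
      \<and> (\<forall>\<tau> x. (\<forall>j<n. \<tau> j < n) \<longrightarrow> x \<in> A \<longrightarrow>
           f (sub (ext_transf n \<tau>) x) = {(i, s) \<in> V. (i, restrict (s \<circ> \<tau>) {..<n}) \<in> f x})
      \<and> (\<forall>i j. i < n \<longrightarrow> j < n \<longrightarrow> f (diag i j) = {(k, s) \<in> V. s i = s j})
      \<and> (\<forall>X s. X \<subseteq> A \<longrightarrow> is_sum_in A X s \<longrightarrow> f s = \<Union> (f ` X)))"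

text \<open>Completely representable. The index set of the disjoint union is taken in 'a and
  the base sets in nat.\<close>
definition completely_representable ::
  "nat \<Rightarrow> (nat set \<Rightarrow> 'a::boolean_algebra \<Rightarrow> 'a) \<Rightarrow> ((nat \<Rightarrow> nat) \<Rightarrow> 'a \<Rightarrow> 'a) \<Rightarrow> (nat \<Rightarrow> nat \<Rightarrow> 'a)
   \<Rightarrow> 'a set \<Rightarrow> bool" where
  "completely_representable n cyl sub diag A \<longleftrightarrow>
     (\<exists>(I::'a set) (U::'a \<Rightarrow> nat set) f. complete_representation n cyl sub diag A I U f)"

end

theory Submission
  imports Defs
begin

(* For an atom d of D, the relation k ~ l iff d <= d_kl is an equivalence on omega; U d
  collects the least element of each class. An element x is represented by the set of
  pairs (d, t) with t an n-tuple over U d and d <= s_t x. Atoms are prime, so the Boolean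
  operations are preserved; diagonals are preserved because the entries of t are class
  representatives; cylindrifications are preserved because c_k x is the sum of the
  s^k_l x, so an atom below s_t c_k x lies below some s_t s^k_l x. Suprema existing in A
  are suprema in D because A is completely embedded, and they are preserved because every
  s_t is completely additive: a finite transformation is a composite of replacements,
  with s^k_l = c_k (d_kl . -), and transpositions. Atomicity gives injectivity, since a
  nonzero x . -y lies above an atom. *)

lemma finite_transf_id [simp]: "finite_transf id"
  unfolding finite_transf_def by simp

lemma finite_transf_repl [simp]: "finite_transf (repl k l)"
  unfolding finite_transf_def repl_def
  by (rule finite_subset[of _ "{k}"]) auto

lemma finite_transf_fun_upd [simp]: "finite_transf \<sigma> \<Longrightarrow> finite_transf (\<sigma>(k := a))"
  unfolding finite_transf_def
  by (rule finite_subset[of _ "insert k {i. \<sigma> i \<noteq> i}"]) auto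

lemma finite_transf_comp [simp]:
  "finite_transf \<sigma> \<Longrightarrow> finite_transf \<tau> \<Longrightarrow> finite_transf (\<sigma> \<circ> \<tau>)"
  unfolding finite_transf_def
  by (rule finite_subset[of _ "{i. \<tau> i \<noteq> i} \<union> {i. \<sigma> i \<noteq> i}"]) auto

lemma finite_transf_ext_transf [simp]: "finite_transf (ext_transf n \<tau>)"
  unfolding finite_transf_def ext_transf_def
  by (rule finite_subset[of _ "{..<n}"]) auto

lemma ext_transf_less [simp]: "j < n \<Longrightarrow> ext_transf n t j = t j"
  by (simp add: ext_transf_def)

lemma ext_transf_id [simp]: "ext_transf n id = id"
  by (auto simp: ext_transf_def fun_eq_iff)

lemma ext_transf_comp_repl:
  "k < n \<Longrightarrow> ext_transf n s \<circ> repl k l = ext_transf n (s(k := ext_transf n s l))"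
  by (auto simp: ext_transf_def repl_def fun_eq_iff)

definition completely_additive :: "('a::order \<Rightarrow> 'b::order) \<Rightarrow> bool" where
  "completely_additive h \<longleftrightarrow> (\<forall>X s. is_sum_in UNIV X s \<longrightarrow> is_sum_in UNIV (h ` X) (h s))"

lemma completely_additive_comp:
  assumes "completely_additive g" "completely_additive h"
  shows "completely_additive (g \<circ> h)"
  unfolding completely_additive_def
proof (intro allI impI)
  fix X :: "'c set" and s :: 'c
  assume "is_sum_in UNIV X s"
  then have "is_sum_in UNIV (g ` h ` X) (g (h s))"
    using assms unfolding completely_additive_def by blast
  then show "is_sum_in UNIV ((g \<circ> h) ` X) ((g \<circ> h) s)"
    by (simp add: image_comp)
qed

lemma completely_additive_left_adjoint:
  fixes h :: "'a::order \<Rightarrow> 'b::order"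
  assumes adj: "\<And>x u. h x \<le> u \<longleftrightarrow> x \<le> r u"
  shows "completely_additive h"
  unfolding completely_additive_def
proof (intro allI impI)
  fix X :: "'a set" and s :: 'a
  assume s: "is_sum_in UNIV X s"
  have "h x \<le> h s" if "x \<in> X" for x
    using s that adj[of s "h s"] adj[of x "h s"] unfolding is_sum_in_def by (blast intro: order_trans)
  moreover have "h s \<le> u" if "\<forall>y\<in>h ` X. y \<le> u" for u
    using s that adj[of s u] adj[of _ u] unfolding is_sum_in_def by blast
  ultimately show "is_sum_in UNIV (h ` X) (h s)"
    unfolding is_sum_in_def by blast
qed

lemma completely_additive_inf: "completely_additive (inf (e::'a::boolean_algebra))"
  by (rule completely_additive_left_adjoint[where r = "sup (- e)"]) (simp only: inf_commute[of e] shunt1)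

lemma atom_le_compl_iff:
  assumes "atom d" shows "d \<le> - a \<longleftrightarrow> \<not> d \<le> a"
proof -
  have "inf d a = bot \<or> inf d a = d" "d \<noteq> bot"
    using assms unfolding atom_def by auto
  then show ?thesis by (metis inf_shunt inf.absorb_iff1 inf_commute)
qed

lemma atom_le_sup_iff:
  assumes "atom d" shows "d \<le> sup a b \<longleftrightarrow> d \<le> a \<or> d \<le> b"
  using atom_le_compl_iff[OF assms, of a] atom_le_compl_iff[OF assms, of b]
    atom_le_compl_iff[OF assms, of "sup a b"]
  by (auto intro: le_supI1 le_supI2)

lemma atom_le_sum:
  assumes "is_sum_in UNIV Y s" "atom d" "d \<le> s"
  shows "\<exists>y\<in>Y. d \<le> y"
proof (rule ccontr)
  assume "\<not> ?thesis"
  then have "\<forall>y\<in>Y. y \<le> - d"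
    using atom_le_compl_iff[OF assms(2)] by (auto intro: compl_le_swap1)
  then have "s \<le> - d" using assms(1) unfolding is_sum_in_def by blast
  then have "d \<le> - d" using assms(3) by (rule order_trans[rotated])
  then show False using atom_le_compl_iff[OF assms(2), of d] by simp
qed

lemma is_sum_in_UNIV_if_complete_sub:
  fixes A :: "'a::boolean_algebra set"
  assumes "complete_sub A" "top \<in> A" "\<And>x. x \<in> A \<Longrightarrow> - x \<in> A"
    and "X \<subseteq> A" "is_sum_in A X s"
  shows "is_sum_in UNIV X s"
proof -
  have s: "s \<in> A" "\<forall>x\<in>X. x \<le> s" "\<And>u. u \<in> A \<Longrightarrow> \<forall>x\<in>X. x \<le> u \<Longrightarrow> s \<le> u"
    using assms(5) unfolding is_sum_in_def by auto
  have "top \<le> u" if "u \<in> A" "\<forall>y\<in>insert (- s) X. y \<le> u" for u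
  proof -
    have "s \<le> u" "- s \<le> u" using that s(3)[of u] by auto
    then have "sup s (- s) \<le> u" by (rule sup_least)
    then show ?thesis by simp
  qed
  then have "is_sum_in A (insert (- s) X) top"
    using assms(2) unfolding is_sum_in_def by simp
  then have top: "is_sum_in UNIV (insert (- s) X) top"
    using assms(1,3,4) s(1) unfolding complete_sub_def by blast
  have "s \<le> v" if "\<forall>x\<in>X. x \<le> v" for v
  proof -
    have "\<forall>y\<in>insert (- s) X. y \<le> sup (- s) v" using that by (auto intro: le_supI2)
    then have "top \<le> sup (- s) v" using top unfolding is_sum_in_def by blast
    then show ?thesis using shunt1[of top s v] by simp
  qed
  then show ?thesis using s(2) unfolding is_sum_in_def by simp
qed

locale qea =
  fixes cyl :: "nat set \<Rightarrow> 'a::boolean_algebra \<Rightarrow> 'a"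
    and sub :: "(nat \<Rightarrow> nat) \<Rightarrow> 'a \<Rightarrow> 'a"
    and diag :: "nat \<Rightarrow> nat \<Rightarrow> 'a"
  assumes qea: "QEA_omega cyl sub diag"
begin

lemma cyl_empty: "cyl {} x = x"
  using qea unfolding QEA_omega_def by metis

lemma cyl_union: "finite \<Gamma> \<Longrightarrow> finite \<Delta> \<Longrightarrow> cyl (\<Gamma> \<union> \<Delta>) x = cyl \<Gamma> (cyl \<Delta> x)"
  using qea unfolding QEA_omega_def by metis

lemma cyl_quantifier: "finite \<Gamma> \<Longrightarrow> is_quantifier (cyl \<Gamma>)"
  using qea unfolding QEA_omega_def by metis

lemma sub_id: "sub id x = x"
  using qea unfolding QEA_omega_def by metis

lemma sub_comp: "finite_transf \<sigma> \<Longrightarrow> finite_transf \<tau> \<Longrightarrow> sub (\<sigma> \<circ> \<tau>) x = sub \<sigma> (sub \<tau> x)"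
  using qea unfolding QEA_omega_def by metis

lemma sub_bool_endo: "finite_transf \<tau> \<Longrightarrow> bool_endo (sub \<tau>)"
  using qea unfolding QEA_omega_def by metis

lemma sub_cyl_cong:
  "finite_transf \<sigma> \<Longrightarrow> finite_transf \<tau> \<Longrightarrow> finite \<Gamma> \<Longrightarrow> (\<And>i. i \<notin> \<Gamma> \<Longrightarrow> \<sigma> i = \<tau> i) \<Longrightarrow>
    sub \<sigma> (cyl \<Gamma> x) = sub \<tau> (cyl \<Gamma> x)"
  using qea unfolding QEA_omega_def by metis

lemma cyl_sub:
  "finite_transf \<tau> \<Longrightarrow> finite \<Gamma> \<Longrightarrow> inj_on \<tau> (\<tau> -` \<Gamma>) \<Longrightarrow>
    cyl \<Gamma> (sub \<tau> x) = sub \<tau> (cyl (\<tau> -` \<Gamma>) x)"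
  using qea unfolding QEA_omega_def by metis

lemma sub_diag: "finite_transf \<tau> \<Longrightarrow> sub \<tau> (diag i j) = diag (\<tau> i) (\<tau> j)"
  using qea unfolding QEA_omega_def by metis

lemma diag_refl [simp]: "diag i i = top"
  using qea unfolding QEA_omega_def by metis

lemma inf_diag_le_sub_repl: "inf x (diag i j) \<le> sub (repl i j) x"
  using qea unfolding QEA_omega_def by metis

lemma sub_bot: "finite_transf \<tau> \<Longrightarrow> sub \<tau> bot = bot"
  and sub_top: "finite_transf \<tau> \<Longrightarrow> sub \<tau> top = top"
  and sub_sup: "finite_transf \<tau> \<Longrightarrow> sub \<tau> (sup x y) = sup (sub \<tau> x) (sub \<tau> y)"
  and sub_inf: "finite_transf \<tau> \<Longrightarrow> sub \<tau> (inf x y) = inf (sub \<tau> x) (sub \<tau> y)"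
  and sub_compl: "finite_transf \<tau> \<Longrightarrow> sub \<tau> (- x) = - sub \<tau> x"
  using sub_bool_endo unfolding bool_endo_def by blast+

lemma sub_mono: "finite_transf \<tau> \<Longrightarrow> x \<le> y \<Longrightarrow> sub \<tau> x \<le> sub \<tau> y"
  by (metis sub_inf inf.absorb_iff1)

lemma cyl_bot: "finite \<Gamma> \<Longrightarrow> cyl \<Gamma> bot = bot"
  and le_cyl: "finite \<Gamma> \<Longrightarrow> x \<le> cyl \<Gamma> x"
  and cyl_inf_cyl: "finite \<Gamma> \<Longrightarrow> cyl \<Gamma> (inf x (cyl \<Gamma> y)) = inf (cyl \<Gamma> x) (cyl \<Gamma> y)"
  using cyl_quantifier unfolding is_quantifier_def by blast+

lemma cyl_mono:
  assumes "finite \<Gamma>" "x \<le> y" shows "cyl \<Gamma> x \<le> cyl \<Gamma> y"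
proof -
  have "x = inf x (cyl \<Gamma> y)" using assms le_cyl[of \<Gamma> y] by (simp add: inf.absorb1 order_trans)
  then have "cyl \<Gamma> x = inf (cyl \<Gamma> x) (cyl \<Gamma> y)" using cyl_inf_cyl[OF assms(1)] by metis
  then show ?thesis by (metis inf.cobounded2)
qed

lemma cyl_compl_cyl:
  assumes "finite \<Gamma>" shows "cyl \<Gamma> (- cyl \<Gamma> x) = - cyl \<Gamma> x"
proof -
  have "inf (cyl \<Gamma> (- cyl \<Gamma> x)) (cyl \<Gamma> x) = cyl \<Gamma> (inf (- cyl \<Gamma> x) (cyl \<Gamma> x))"
    using cyl_inf_cyl[OF assms] by metis
  also have "\<dots> = bot" using cyl_bot[OF assms] by simp
  finally have "cyl \<Gamma> (- cyl \<Gamma> x) \<le> - cyl \<Gamma> x" by (simp add: inf_shunt)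
  then show ?thesis using le_cyl[OF assms] by (simp add: antisym)
qed

lemma cyl_le_iff:
  assumes "finite \<Gamma>" shows "cyl \<Gamma> x \<le> u \<longleftrightarrow> x \<le> - cyl \<Gamma> (- u)"
proof
  assume "cyl \<Gamma> x \<le> u"
  then have "cyl \<Gamma> (- u) \<le> cyl \<Gamma> (- cyl \<Gamma> x)" using assms by (simp add: cyl_mono)
  also have "\<dots> = - cyl \<Gamma> x" using assms by (rule cyl_compl_cyl)
  also have "\<dots> \<le> - x" using assms by (simp add: le_cyl)
  finally show "x \<le> - cyl \<Gamma> (- u)" by (rule compl_le_swap1)
next
  assume "x \<le> - cyl \<Gamma> (- u)"
  then have "cyl \<Gamma> x \<le> cyl \<Gamma> (- cyl \<Gamma> (- u))" using assms by (simp add: cyl_mono)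
  also have "\<dots> = - cyl \<Gamma> (- u)" using assms by (rule cyl_compl_cyl)
  also have "\<dots> \<le> u" using le_cyl[OF assms, of "- u"] by (rule compl_le_swap2)
  finally show "cyl \<Gamma> x \<le> u" .
qed

lemma completely_additive_cyl: "finite \<Gamma> \<Longrightarrow> completely_additive (cyl \<Gamma>)"
  by (rule completely_additive_left_adjoint) (rule cyl_le_iff)

lemma diag_sym: "diag i j = diag j i"
proof -
  have "diag i j \<le> diag j i" for i j
  proof (cases "i = j")
    case False
    have "inf (- diag j i) (diag i j) \<le> sub (repl i j) (- diag j i)"
      by (rule inf_diag_le_sub_repl)
    also have "\<dots> = bot"
      using False by (simp add: sub_compl sub_diag repl_def)
    finally show ?thesis by (simp add: inf_shunt inf_commute bot_unique)
  qed simp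
  then show ?thesis by (simp add: antisym)
qed

lemma diag_trans: "inf (diag i j) (diag j k) \<le> diag i k"
proof (cases "j = k")
  case False
  have "inf (diag j k) (diag j i) \<le> sub (repl j i) (diag j k)" by (rule inf_diag_le_sub_repl)
  also have "\<dots> = diag i k" using False by (simp add: sub_diag repl_def)
  finally show ?thesis by (simp add: diag_sym inf_commute)
qed simp

lemma cyl_sub_repl:
  assumes "m \<noteq> a" shows "cyl {m} (sub (repl m a) y) = sub (repl m a) y"
proof -
  have "repl m a -` {m} = {}" using assms by (auto simp: repl_def split: if_splits)
  then show ?thesis using cyl_sub[of "repl m a" "{m}" y] by (simp add: cyl_empty)
qed

lemma cyl_diag_fresh:
  assumes "m \<noteq> a" "m \<noteq> b" shows "cyl {m} (diag a b) = diag a b"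
proof -
  have "diag a b = sub (repl m a) (diag m b)"
    using assms by (simp add: sub_diag repl_def)
  then show ?thesis using cyl_sub_repl[OF assms(1)] by metis
qed

lemma sub_repl_eq_cyl_diag:
  assumes "m \<noteq> a" shows "sub (repl m a) y = cyl {m} (inf (diag m a) y)"
proof (rule antisym)
  let ?w = "cyl {m} (inf (diag m a) y)"
  have "sub (repl m a) (- ?w) = sub id (- ?w)"
    using sub_cyl_cong[of "repl m a" id "{m}" "- ?w"]
    by (simp add: cyl_compl_cyl repl_def)
  then have compl_w: "sub (repl m a) (- ?w) = - ?w" by (simp add: sub_id)
  have "inf y (- ?w) \<le> - diag m a"
    using le_cyl[of "{m}" "inf (diag m a) y"] by (simp add: shunt1 inf_commute sup_commute)
  then have "sub (repl m a) (inf y (- ?w)) \<le> sub (repl m a) (- diag m a)"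
    by (simp add: sub_mono)
  also have "\<dots> = bot" by (simp add: sub_compl sub_diag repl_def)
  finally have "inf (sub (repl m a) y) (- ?w) = bot"
    using compl_w by (simp add: sub_inf bot_unique)
  then show "sub (repl m a) y \<le> ?w" by (simp add: inf_shunt)
next
  have "inf y (diag m a) \<le> sub (repl m a) y" by (rule inf_diag_le_sub_repl)
  then have "cyl {m} (inf (diag m a) y) \<le> cyl {m} (sub (repl m a) y)"
    by (simp add: cyl_mono inf_commute)
  then show "cyl {m} (inf (diag m a) y) \<le> sub (repl m a) y"
    using cyl_sub_repl[OF assms] by simp
qed

lemma completely_additive_sub_repl:
  assumes "m \<noteq> a" shows "completely_additive (sub (repl m a))"
proof -
  have "sub (repl m a) = cyl {m} \<circ> inf (diag m a)"
    using sub_repl_eq_cyl_diag[OF assms] by auto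
  moreover have "completely_additive (cyl {m} \<circ> inf (diag m a))"
    by (intro completely_additive_comp completely_additive_cyl completely_additive_inf) simp
  ultimately show ?thesis by simp
qed

lemma completely_additive_sub_transposition: "completely_additive (sub (id(k := l, l := k)))"
proof (rule completely_additive_left_adjoint)
  let ?\<pi> = "id(k := l, l := k)"
  have ft: "finite_transf ?\<pi>" by simp
  have inv: "sub ?\<pi> (sub ?\<pi> x) = x" for x
  proof -
    have "?\<pi> \<circ> ?\<pi> = id" by (auto simp: fun_eq_iff)
    then show ?thesis using sub_comp[OF ft ft, of x] by (simp add: sub_id)
  qed
  show "sub ?\<pi> x \<le> u \<longleftrightarrow> x \<le> sub ?\<pi> u" for x u
    using sub_mono[OF ft, of x "sub ?\<pi> u"] sub_mono[OF ft, of "sub ?\<pi> x" u] inv by auto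
qed

lemma diag_inf_sub_repl_le:
  assumes "m \<noteq> a" "m \<noteq> b"
  shows "inf (diag a b) (sub (repl m a) y) \<le> sub (repl m b) y"
proof -
  have "inf (diag a b) (sub (repl m a) y) = cyl {m} (inf (diag a b) (inf (diag m a) y))"
    using cyl_inf_cyl[of "{m}" "inf (diag m a) y" "diag a b"] cyl_diag_fresh[OF assms]
    by (simp add: sub_repl_eq_cyl_diag[OF assms(1)] inf_commute)
  also have "\<dots> \<le> cyl {m} (inf (diag m b) y)"
  proof (rule cyl_mono)
    have "inf (diag m a) (diag a b) \<le> diag m b" by (rule diag_trans)
    then have "inf (inf (diag m a) (diag a b)) y \<le> inf (diag m b) y"
      by (rule inf_mono) simp
    then show "inf (diag a b) (inf (diag m a) y) \<le> inf (diag m b) y"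
      by (simp add: ac_simps)
  qed simp
  also have "\<dots> = sub (repl m b) y" using sub_repl_eq_cyl_diag[OF assms(2)] by simp
  finally show ?thesis .
qed

lemma completely_additive_sub:
  assumes "finite_transf \<sigma>" shows "completely_additive (sub \<sigma>)"
  using assms
proof (induction "card {i. \<sigma> i \<noteq> i}" arbitrary: \<sigma> rule: less_induct)
  case less
  show ?case
  proof (cases "\<sigma> = id")
    case True
    then show ?thesis by (simp add: sub_id completely_additive_def)
  next
    case False
    then obtain k where k: "\<sigma> k \<noteq> k" by (auto simp: fun_eq_iff)
    obtain \<sigma>' \<epsilon> where factor: "\<sigma> = \<sigma>' \<circ> \<epsilon>" "finite_transf \<sigma>'" "finite_transf \<epsilon>"
      and smaller: "{i. \<sigma>' i \<noteq> i} \<subset> {i. \<sigma> i \<noteq> i}" and additive: "completely_additive (sub \<epsilon>)"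
    proof (cases "\<sigma> (\<sigma> k) = \<sigma> k")
      case True
      show ?thesis
        by (rule that[of "\<sigma>(k := k)" "repl k (\<sigma> k)"])
          (use k True less.prems completely_additive_sub_repl in \<open>auto simp: repl_def fun_eq_iff\<close>)
    next
      case False
      show ?thesis
        by (rule that[of "\<sigma> \<circ> id(k := \<sigma> k, \<sigma> k := k)" "id(k := \<sigma> k, \<sigma> k := k)"])
          (use k False less.prems completely_additive_sub_transposition in \<open>auto simp: fun_eq_iff\<close>)
    qed
    have "card {i. \<sigma>' i \<noteq> i} < card {i. \<sigma> i \<noteq> i}"
      using smaller less.prems unfolding finite_transf_def by (rule psubset_card_mono[rotated])
    then have "completely_additive (sub \<sigma>')" using less.hyps factor(2) by blast
    moreover have "sub \<sigma> = sub \<sigma>' \<circ> sub \<epsilon>" using factor by (auto simp: sub_comp)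
    ultimately show ?thesis using additive completely_additive_comp by simp
  qed
qed

lemma cyl_Nr_disjoint:
  assumes "x \<in> Nr n cyl" "finite F" "F \<inter> {..<n} = {}"
  shows "cyl F x = x"
  using assms(2,3)
proof (induction F rule: finite_induct)
  case empty
  then show ?case by (simp add: cyl_empty)
next
  case (insert i F)
  have "cyl (insert i F) x = cyl {i} (cyl F x)"
    using cyl_union[of "{i}" F x] insert.hyps(1) by simp
  also have "\<dots> = cyl {i} x" using insert.IH insert.prems by simp
  also have "\<dots> = x"
  proof -
    have "n \<le> i" using insert.prems by auto
    then show ?thesis using assms(1) unfolding Nr_def by blast
  qed
  finally show ?case .
qed

lemma sub_Nr_cong:
  assumes "x \<in> Nr n cyl" "finite_transf \<sigma>" "finite_transf \<tau>" "\<And>j. j < n \<Longrightarrow> \<sigma> j = \<tau> j"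
  shows "sub \<sigma> x = sub \<tau> x"
proof -
  let ?F = "{i. \<sigma> i \<noteq> \<tau> i}"
  have "finite ?F"
    using assms(2,3) unfolding finite_transf_def by (rule finite_subset[rotated, OF finite_UnI]) auto
  moreover have "?F \<inter> {..<n} = {}" using assms(4) by auto
  ultimately have "cyl ?F x = x" by (rule cyl_Nr_disjoint[OF assms(1)])
  moreover have "sub \<sigma> (cyl ?F x) = sub \<tau> (cyl ?F x)"
    by (rule sub_cyl_cong[OF assms(2,3) \<open>finite ?F\<close>]) simp
  ultimately show ?thesis by simp
qed

text \<open>For fresh m, the substitution t(k := c) acts on w as s^m_c after t(k := m), and
  d_ab \<cdot> s^m_a y \<le> s^m_b y.\<close>

lemma le_sub_ext_transf_upd_diag:
  assumes "w \<in> Nr n cyl" "d \<le> diag a b" "d \<le> sub (ext_transf n (t(k := a))) w"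
  shows "d \<le> sub (ext_transf n (t(k := b))) w"
proof -
  obtain m where "m \<notin> {..<n} \<union> t ` {..<n} \<union> {a, b}"
    using ex_new_if_finite[OF infinite_UNIV_nat, of "{..<n} \<union> t ` {..<n} \<union> {a, b}"] by auto
  then have m: "n \<le> m" "m \<notin> t ` {..<n}" "m \<noteq> a" "m \<noteq> b" by auto
  let ?y = "sub (ext_transf n (t(k := m))) w"
  have fresh: "sub (ext_transf n (t(k := c))) w = sub (repl m c) ?y" for c
  proof -
    have "sub (ext_transf n (t(k := c))) w = sub (repl m c \<circ> ext_transf n (t(k := m))) w"
      by (rule sub_Nr_cong[OF assms(1)]) (simp_all, use m in \<open>auto simp: ext_transf_def repl_def\<close>)
    then show ?thesis by (simp add: sub_comp)
  qed
  have "d \<le> inf (diag a b) (sub (repl m a) ?y)" using assms(2,3) fresh[of a] by simp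
  also have "\<dots> \<le> sub (repl m b) ?y" using m(3,4) by (rule diag_inf_sub_repl_le)
  finally show ?thesis using fresh[of b] by simp
qed

lemma sub_ext_transf_le_sub_cyl:
  assumes "finite \<Gamma>" "\<forall>j<n. j \<notin> \<Gamma> \<longrightarrow> t j = s j"
  shows "sub (ext_transf n t) w \<le> sub (ext_transf n s) (cyl \<Gamma> w)"
proof -
  have "sub (ext_transf n t) w \<le> sub (ext_transf n t) (cyl \<Gamma> w)"
    using assms(1) by (simp add: sub_mono le_cyl)
  also have "\<dots> = sub (ext_transf n s) (cyl \<Gamma> w)"
    by (rule sub_cyl_cong) (simp_all add: assms, use assms(2) in \<open>auto simp: ext_transf_def\<close>)
  finally show ?thesis .
qed

lemma atom_le_sub_cyl_singleton:
  assumes cyl_sum: "\<forall>x k. is_sum_in UNIV {sub (repl k l) x | l. True} (cyl {k} x)"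
    and "k < n" "atom d" "d \<le> sub (ext_transf n s) (cyl {k} w)"
  shows "\<exists>l. d \<le> sub (ext_transf n (s(k := l))) w"
proof -
  let ?\<sigma> = "ext_transf n s"
  have "is_sum_in UNIV (sub ?\<sigma> ` {sub (repl k l) w | l. True}) (sub ?\<sigma> (cyl {k} w))"
    using cyl_sum completely_additive_sub[of ?\<sigma>] unfolding completely_additive_def by simp
  then obtain l where "d \<le> sub ?\<sigma> (sub (repl k l) w)"
    using atom_le_sum assms(3,4) by blast
  also have "\<dots> = sub (ext_transf n (s(k := ?\<sigma> l))) w"
    using assms(2) by (simp add: sub_comp[symmetric] ext_transf_comp_repl)
  finally show ?thesis by blast
qed

lemma atom_le_sub_cyl:
  assumes cyl_sum: "\<forall>x k. is_sum_in UNIV {sub (repl k l) x | l. True} (cyl {k} x)"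
    and "\<Gamma> \<subseteq> {..<n}" "atom d" "d \<le> sub (ext_transf n s) (cyl \<Gamma> w)"
  shows "\<exists>t. (\<forall>j. j \<notin> \<Gamma> \<longrightarrow> t j = s j) \<and> d \<le> sub (ext_transf n t) w"
proof -
  have "finite \<Gamma>" using assms(2) finite_subset by blast
  then show ?thesis
    using assms(2,4)
  proof (induction \<Gamma> arbitrary: s rule: finite_induct)
    case empty
    then show ?case by (auto simp: cyl_empty)
  next
    case (insert k \<Gamma>)
    have "cyl (insert k \<Gamma>) w = cyl {k} (cyl \<Gamma> w)"
      using cyl_union[of "{k}" \<Gamma> w] insert.hyps(1) by simp
    then have "d \<le> sub (ext_transf n s) (cyl {k} (cyl \<Gamma> w))" using insert.prems(2) by simp
    then obtain l where "d \<le> sub (ext_transf n (s(k := l))) (cyl \<Gamma> w)"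
      using atom_le_sub_cyl_singleton[OF cyl_sum _ assms(3)] insert.prems(1) by blast
    then obtain t where "\<forall>j. j \<notin> \<Gamma> \<longrightarrow> t j = (s(k := l)) j" "d \<le> sub (ext_transf n t) w"
      using insert.IH insert.prems(1) by blast
    then show ?case by (intro exI[of _ t]) auto
  qed
qed

definition diag_rep :: "'a \<Rightarrow> nat \<Rightarrow> nat" where
  "diag_rep d k = (LEAST l. d \<le> diag k l)"

lemma le_diag_trans:
  assumes "d \<le> diag k l" "d \<le> diag l j" shows "d \<le> diag k j"
  using le_infI[OF assms] diag_trans by (rule order_trans)

lemma le_diag_diag_rep: "d \<le> diag k (diag_rep d k)"
  unfolding diag_rep_def by (rule LeastI[of _ k]) simp

lemma diag_rep_eq:
  assumes "d \<le> diag k l" shows "diag_rep d k = diag_rep d l"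
proof -
  have "d \<le> diag k j \<longleftrightarrow> d \<le> diag l j" for j
    using assms le_diag_trans[of d l k j] le_diag_trans[of d k l j] diag_sym[of k l] by auto
  then show ?thesis unfolding diag_rep_def by simp
qed

lemma diag_rep_idem: "diag_rep d (diag_rep d k) = diag_rep d k"
  using diag_rep_eq[OF le_diag_diag_rep[of d k]] by simp

lemma le_sub_ext_transf_diag_rep:
  assumes "z \<in> Nr n cyl" "d \<le> sub (ext_transf n t) z"
  shows "d \<le> sub (ext_transf n (restrict (diag_rep d \<circ> t) {..<n})) z"
proof -
  let ?u = "\<lambda>i j. if j < i then diag_rep d (t j) else t j"
  have "d \<le> sub (ext_transf n (?u i)) z" if "i \<le> n" for i
    using that
  proof (induction i)
    case 0
    then show ?case using assms(2) by simp
  next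
    case (Suc i)
    have "d \<le> sub (ext_transf n ((?u i)(i := t i))) z"
      using Suc by (simp add: fun_upd_idem)
    then have "d \<le> sub (ext_transf n ((?u i)(i := diag_rep d (t i)))) z"
      by (rule le_sub_ext_transf_upd_diag[OF assms(1) le_diag_diag_rep])
    moreover have "(?u i)(i := diag_rep d (t i)) = ?u (Suc i)" by (auto simp: fun_eq_iff)
    ultimately show ?case by simp
  qed
  then have "d \<le> sub (ext_transf n (?u n)) z" by simp
  moreover have "ext_transf n (?u n) = ext_transf n (restrict (diag_rep d \<circ> t) {..<n})"
    by (auto simp: ext_transf_def fun_eq_iff)
  ultimately show ?thesis by simp
qed

end

locale qea_neat_subalgebra = qea cyl sub diag
  for cyl :: "nat set \<Rightarrow> 'a::boolean_algebra \<Rightarrow> 'a" and sub diag +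
  fixes n :: nat and A :: "'a set"
  assumes atomic: "atomic TYPE('a)"
    and cyl_sum: "\<forall>x k. is_sum_in UNIV {sub (repl k l) x | l. True} (cyl {k} x)"
    and subalgebra: "subalg_Nr n cyl sub diag A"
    and complete: "complete_sub A"
begin

definition U :: "'a \<Rightarrow> nat set" where
  "U d = {k. diag_rep d k = k}"

definition V :: "('a \<times> (nat \<Rightarrow> nat)) set" where
  "V = Sigma {d. atom d} (\<lambda>d. PiE {..<n} (\<lambda>_. U d))"

definition f :: "'a \<Rightarrow> ('a \<times> (nat \<Rightarrow> nat)) set" where
  "f x = {(d, t) \<in> V. d \<le> sub (ext_transf n t) x}"

lemma A_Nr: "x \<in> A \<Longrightarrow> x \<in> Nr n cyl"
  and A_top: "top \<in> A"
  and A_compl: "x \<in> A \<Longrightarrow> - x \<in> A"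
  and A_inf: "x \<in> A \<Longrightarrow> y \<in> A \<Longrightarrow> inf x y \<in> A"
  using subalgebra unfolding subalg_Nr_def by (metis subsetD)+

lemma mem_V: "(d, t) \<in> V \<longleftrightarrow> atom d \<and> t \<in> PiE {..<n} (\<lambda>_. U d)"
  by (simp add: V_def)

lemma mem_f: "(d, t) \<in> f x \<longleftrightarrow> (d, t) \<in> V \<and> d \<le> sub (ext_transf n t) x"
  by (simp add: f_def)

lemma f_subset_V: "f x \<subseteq> V"
  by (auto simp: f_def)

lemma f_bot: "f bot = {}"
  by (auto simp: f_def mem_V sub_bot atom_def bot_unique)

lemma f_top: "f top = V"
  by (auto simp: f_def sub_top)

lemma f_sup: "f (sup x y) = f x \<union> f y"
proof -
  have "(d, t) \<in> f (sup x y) \<longleftrightarrow> (d, t) \<in> f x \<union> f y" for d t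
    by (cases "atom d") (simp_all add: mem_f mem_V sub_sup atom_le_sup_iff, blast)
  then show ?thesis by auto
qed

lemma f_inf: "f (inf x y) = f x \<inter> f y"
  by (auto simp: f_def sub_inf)

lemma f_compl: "f (- x) = V - f x"
proof -
  have "(d, t) \<in> f (- x) \<longleftrightarrow> (d, t) \<in> V - f x" for d t
    by (cases "atom d") (simp_all add: mem_f mem_V sub_compl atom_le_compl_iff, blast)
  then show ?thesis by auto
qed

lemma f_mono: "x \<le> y \<Longrightarrow> f x \<subseteq> f y"
  by (metis f_inf inf.absorb1 inf.cobounded2)

lemma diag_rep_mem_U: "diag_rep d k \<in> U d"
  by (simp add: U_def diag_rep_idem)

lemma diag_rep_tuple_mem_f:
  assumes "x \<in> A" "atom d" "d \<le> sub (ext_transf n t) x"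
  shows "(d, restrict (diag_rep d \<circ> t) {..<n}) \<in> f x"
  using assms le_sub_ext_transf_diag_rep[OF A_Nr] by (auto simp: mem_f mem_V diag_rep_mem_U)

lemma le_if_f_subset:
  assumes "x \<in> A" "y \<in> A" "f x \<subseteq> f y"
  shows "x \<le> y"
proof (rule ccontr)
  assume "\<not> x \<le> y"
  then have "inf x (- y) \<noteq> bot" by (simp add: inf_shunt)
  then obtain d where d: "atom d" "d \<le> inf x (- y)"
    using atomic unfolding atomic_def by blast
  then have "d \<le> sub (ext_transf n id) (inf x (- y))"
    by (simp add: sub_id)
  then have "(d, restrict (diag_rep d \<circ> id) {..<n}) \<in> f (inf x (- y))"
    using assms(1,2) d(1) by (intro diag_rep_tuple_mem_f) (simp_all add: A_inf A_compl)
  then show False using assms(3) by (auto simp: f_inf f_compl)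
qed

lemma inj_on_f: "inj_on f A"
  by (rule inj_onI) (simp add: antisym le_if_f_subset)

lemma f_sub:
  assumes "\<forall>j<n. \<tau> j < n" "x \<in> A"
  shows "f (sub (ext_transf n \<tau>) x) = {(i, s) \<in> V. (i, restrict (s \<circ> \<tau>) {..<n}) \<in> f x}"
proof -
  have "sub (ext_transf n s) (sub (ext_transf n \<tau>) x) = sub (ext_transf n (restrict (s \<circ> \<tau>) {..<n})) x"
    for s
  proof -
    have "ext_transf n s \<circ> ext_transf n \<tau> = ext_transf n (restrict (s \<circ> \<tau>) {..<n})"
      using assms(1) by (auto simp: ext_transf_def fun_eq_iff)
    then show ?thesis by (simp flip: sub_comp)
  qed
  moreover have "(d, restrict (s \<circ> \<tau>) {..<n}) \<in> V" if "(d, s) \<in> V" for d s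
    using that assms(1) by (auto simp: mem_V PiE_iff)
  ultimately show ?thesis by (auto simp: mem_f)
qed

lemma f_diag:
  assumes "i < n" "j < n"
  shows "f (diag i j) = {(k, s) \<in> V. s i = s j}"
proof -
  have "s i = s j" if "(d, s) \<in> V" "d \<le> diag (s i) (s j)" for d s
  proof -
    have "s i \<in> U d" "s j \<in> U d" using that(1) assms by (auto simp: mem_V)
    then show ?thesis using diag_rep_eq[OF that(2)] by (simp add: U_def)
  qed
  moreover have "sub (ext_transf n s) (diag i j) = diag (s i) (s j)" for s
    using assms by (simp add: sub_diag)
  ultimately show ?thesis by (auto simp: mem_f)
qed

lemma f_cyl:
  assumes "\<Gamma> \<subseteq> {..<n}" "x \<in> A"
  shows "f (cyl \<Gamma> x) = {(i, s) \<in> V. \<exists>t. (i, t) \<in> f x \<and> (\<forall>j<n. j \<notin> \<Gamma> \<longrightarrow> t j = s j)}"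
proof -
  have "finite \<Gamma>" using assms(1) finite_subset by blast
  have "(d, s) \<in> f (cyl \<Gamma> x) \<longleftrightarrow> (d, s) \<in> V \<and> (\<exists>t. (d, t) \<in> f x \<and> (\<forall>j<n. j \<notin> \<Gamma> \<longrightarrow> t j = s j))"
    for d s
  proof
    assume "(d, s) \<in> f (cyl \<Gamma> x)"
    then have ds: "(d, s) \<in> V" "atom d" "d \<le> sub (ext_transf n s) (cyl \<Gamma> x)"
      by (auto simp: mem_f mem_V)
    then obtain t where t: "\<forall>j. j \<notin> \<Gamma> \<longrightarrow> t j = s j" "d \<le> sub (ext_transf n t) x"
      using atom_le_sub_cyl[OF cyl_sum assms(1)] by blast
    let ?t = "restrict (diag_rep d \<circ> t) {..<n}"
    have "(d, ?t) \<in> f x" using diag_rep_tuple_mem_f[OF assms(2) ds(2) t(2)] .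
    moreover have "\<forall>j<n. j \<notin> \<Gamma> \<longrightarrow> ?t j = s j"
      using t(1) ds(1) by (auto simp: mem_V U_def)
    ultimately show "(d, s) \<in> V \<and> (\<exists>t. (d, t) \<in> f x \<and> (\<forall>j<n. j \<notin> \<Gamma> \<longrightarrow> t j = s j))"
      using ds(1) by blast
  next
    assume "(d, s) \<in> V \<and> (\<exists>t. (d, t) \<in> f x \<and> (\<forall>j<n. j \<notin> \<Gamma> \<longrightarrow> t j = s j))"
    then obtain t where "(d, s) \<in> V" "d \<le> sub (ext_transf n t) x" "\<forall>j<n. j \<notin> \<Gamma> \<longrightarrow> t j = s j"
      by (auto simp: mem_f)
    then show "(d, s) \<in> f (cyl \<Gamma> x)"
      using sub_ext_transf_le_sub_cyl[OF \<open>finite \<Gamma>\<close>] by (auto simp: mem_f intro: order_trans)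
  qed
  then show ?thesis by auto
qed

lemma f_Sup:
  assumes "X \<subseteq> A" "is_sum_in A X s"
  shows "f s = \<Union> (f ` X)"
proof
  have sum: "is_sum_in UNIV X s"
    using is_sum_in_UNIV_if_complete_sub[OF complete A_top A_compl assms] .
  show "f s \<subseteq> \<Union> (f ` X)"
  proof
    fix p assume "p \<in> f s"
    then obtain d t where p: "p = (d, t)" "(d, t) \<in> V" "atom d" "d \<le> sub (ext_transf n t) s"
      by (auto simp: f_def mem_V)
    have "is_sum_in UNIV (sub (ext_transf n t) ` X) (sub (ext_transf n t) s)"
      using sum completely_additive_sub[of "ext_transf n t"] unfolding completely_additive_def by simp
    then obtain x where "x \<in> X" "d \<le> sub (ext_transf n t) x"
      using atom_le_sum p(3,4) by blast
    then show "p \<in> \<Union> (f ` X)" using p(1,2) by (auto simp: mem_f)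
  qed
  show "\<Union> (f ` X) \<subseteq> f s"
    using assms(2) f_mono unfolding is_sum_in_def by blast
qed

lemma complete_representation_f: "complete_representation n cyl sub diag A {d. atom d} U f"
  unfolding complete_representation_def Let_def V_def[symmetric]
  by (intro conjI ballI allI impI inj_on_f f_subset_V f_bot f_top f_sup f_inf f_compl;
      rule f_cyl f_sub f_diag f_Sup; assumption)

end

theorem mainTheorem8:
  fixes n :: nat
    and cyl :: "nat set \<Rightarrow> 'a::boolean_algebra \<Rightarrow> 'a"
    and sub :: "(nat \<Rightarrow> nat) \<Rightarrow> 'a \<Rightarrow> 'a"
    and diag :: "nat \<Rightarrow> nat \<Rightarrow> 'a"
    and A :: "'a set"
  assumes "QEA_omega cyl sub diag"
    and "atomic TYPE('a)"
    and "\<forall>x k. is_sum_in UNIV {sub (repl k l) x | l. True} (cyl {k} x)"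
    and "subalg_Nr n cyl sub diag A"
    and "complete_sub A"
  shows "completely_representable n cyl sub diag A"
proof -
  interpret qea_neat_subalgebra cyl sub diag n A
    using assms by unfold_locales
  show ?thesis
    unfolding completely_representable_def using complete_representation_f by blast
qed

end
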